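(* Let $V$ be a reflexive Banach space, $F: V\to\mathbb{R}$ Fréchet differentiable and convex, $G\in\Gamma_0(V)$, $E=F+G$. For $1\le k\le N$ let $V_k$ be reflexive Banach spaces, $R_k^*: V_k\to V$ bounded linear with $V=\sum_k R_k^*V_k$ and surjective adjoints, and $d_k, G_k: V_k\times V\to\overline{\mathbb{R}}$ proper, convex, lower semicontinuous in the first argument. Assume: (i) (stable decomposition) there is $q>1$ such that for every bounded convex $K\subseteq V$ there is $C_{0,K}>0$ such that for all $u,v\in K\cap\operatorname{dom}G$ there exist $w_k\in V_k$ with $u-v=\sum_{k=1}^N R_k^*w_k$, $\sum_{k=1}^N d_k(w_k,v)\le \frac{C_{0,K}^q}{q}\|u-v\|^q$ and $\sum_{k=1}^N G_k(w_k,v)\le G(u)+(N-1)G(v)$; (ii) (strengthened convexity) there is $\tau_0\in(0,1]$ such that for all $v\in V$, $w_k\in V_k$, $\tau\in(0,\tau_0]$: $(1-\tau N)E(v)+\tau\sum_{k=1}^N E(v+R_k^*w_k)\ge E(v+\tau\sum_{k=1}^N R_k^*w_k)$; (iii) (local stability) there is $\omega_0>0$ such that for all $v\in\operatorname{dom}G$, $w_k\in V_k$, $1\le k\le N$: $D_F(v+R_k^*w_k,v)\le\omega_0 d_k(w_k,v)$ and $G(v+R_k^*w_k)\le G_k(w_k,v)$. Let $\tau\in(0,\tau_0]$, $\omega\ge\omega_0$. Then for every bounded convex $K\subseteq V$, $$D_F(u,v)+G(u)\le M_{\tau,\omega}(u,v)\le\frac{\omega C_{0,K'}^q}{q\tau^{q-1}}\|u-v\|^q+\tau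 G\Big(\frac1\tau u-\Big(\frac1\tau-1\Big)v\Big)+(1-\tau)G(v),\quad u,v\in K\cap\operatorname{dom}G,$$ where $K'=\{\frac1\tau u-(\frac1\tau-1)v : u,v\in K\}$ and $M_{\tau,\omega}(u,v)=\tau\inf\{\sum_{k=1}^N(\omega d_k+G_k)(w_k,v): u-v=\tau\sum_{k=1}^N R_k^*w_k,\ w_k\in V_k\}+(1-\tau N)G(v)$.
   Context: $\Gamma_0(V)$ is the set of proper, convex, lower semicontinuous functionals $V\to\mathbb{R}\cup\{+\infty\}$; $\operatorname{dom} G=\{u: G(u)<\infty\}$. Bregman distance: $D_F(u,v)=F(u)-F(v)-\langle F'(v),u-v\rangle$. *)

theory Defs
  imports "HOL-Analysis.Analysis"
begin

definition reflexive_space :: "'a::banach itself \<Rightarrow> bool" where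
  "reflexive_space _ \<longleftrightarrow>
     (\<forall>\<phi> :: ('a \<Rightarrow>\<^sub>L real) \<Rightarrow>\<^sub>L real. \<exists>x::'a. \<forall>f. blinfun_apply \<phi> f = blinfun_apply f x)"

definition ereal_convex_on :: "'a::real_vector set \<Rightarrow> ('a \<Rightarrow> ereal) \<Rightarrow> bool" where
  "ereal_convex_on S f \<longleftrightarrow>
     (\<forall>x\<in>S. \<forall>y\<in>S. \<forall>t::real. 0 \<le> t \<and> t \<le> 1 \<longrightarrow>
        f ((1 - t) *\<^sub>R x + t *\<^sub>R y) \<le> ereal (1 - t) * f x + ereal t * f y)"

definition ereal_lsc_on :: "'a::metric_space set \<Rightarrow> ('a \<Rightarrow> ereal) \<Rightarrow> bool" where
  "ereal_lsc_on S f \<longleftrightarrow>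
     (\<forall>x\<in>S. \<forall>X. (\<forall>n. X n \<in> S) \<and> X \<longlonglongrightarrow> x \<longrightarrow> f x \<le> liminf (\<lambda>n. f (X n)))"

definition proper_convex_lsc_on :: "'a::real_normed_vector set \<Rightarrow> ('a \<Rightarrow> ereal) \<Rightarrow> bool" where
  "proper_convex_lsc_on S f \<longleftrightarrow>
     (\<forall>x\<in>S. f x \<noteq> -\<infinity>) \<and> (\<exists>x\<in>S. f x < \<infinity>) \<and> ereal_convex_on S f \<and> ereal_lsc_on S f"

definition Gamma0 :: "('a::real_normed_vector \<Rightarrow> ereal) \<Rightarrow> bool" where
  "Gamma0 G \<longleftrightarrow> proper_convex_lsc_on UNIV G"

definition edom :: "('a \<Rightarrow> ereal) \<Rightarrow> 'a set" where
  "edom G = {u. G u < \<infinity>}"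

definition bregman :: "('a::real_normed_vector \<Rightarrow> real) \<Rightarrow> 'a \<Rightarrow> 'a \<Rightarrow> real" where
  "bregman F u v = F u - F v - frechet_derivative F (at v) (u - v)"

text \<open>M_{tau,omega}(u,v); the spaces V_k are the sets Vk k, R k plays the role of R_k^*.\<close>
definition M_tau_omega ::
  "nat \<Rightarrow> (nat \<Rightarrow> 'w::real_vector set) \<Rightarrow> (nat \<Rightarrow> 'w \<Rightarrow> 'v::real_vector)
   \<Rightarrow> (nat \<Rightarrow> 'w \<Rightarrow> 'v \<Rightarrow> ereal) \<Rightarrow> (nat \<Rightarrow> 'w \<Rightarrow> 'v \<Rightarrow> ereal) \<Rightarrow> ('v \<Rightarrow> ereal)
   \<Rightarrow> real \<Rightarrow> real \<Rightarrow> 'v \<Rightarrow> 'v \<Rightarrow> ereal" where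
  "M_tau_omega N Vk R d Gk G \<tau> \<omega> u v =
     ereal \<tau> * Inf {(\<Sum>k=1..N. ereal \<omega> * d k (w k) v + Gk k (w k) v) | w.
                     (\<forall>k\<in>{1..N}. w k \<in> Vk k) \<and> u - v = \<tau> *\<^sub>R (\<Sum>k=1..N. R k (w k))}
     + ereal (1 - \<tau> * real N) * G v"

end

theory Submission
  imports Defs
begin

(* Lower bound: for every admissible decomposition u - v = \<tau> \<Sum> R_k w_k, strengthened convexity
   gives E(u) \<le> (1 - \<tau>N) E(v) + \<tau> \<Sum> E(v + R_k w_k), and local stability bounds each
   E(v + R_k w_k) by F(v) + F'(v)(R_k w_k) + \<omega> d_k(w_k,v) + G_k(w_k,v). The linear terms add up to
   F'(v)(u - v), so D_F(u,v) + G(u) is bounded by the functional minimised in M.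
   Upper bound: the stable decomposition of u' = u/\<tau> - (1/\<tau> - 1) v against v (both lie in K')
   is admissible for M since u - v = \<tau> (u' - v), and \<parallel>u' - v\<parallel> = \<parallel>u - v\<parallel>/\<tau> yields the factor
   \<tau>^(1-q). Convexity of F makes D_F, hence d_k, nonnegative, so \<omega>_0 may be replaced by any
   \<omega> \<ge> \<omega>_0. *)

lemma bregman_nonneg:
  fixes F :: "'v::real_normed_vector \<Rightarrow> real"
  assumes diff: "F differentiable (at v)" and conv: "convex_on UNIV F"
  shows "0 \<le> bregman F u v"
proof -
  let ?D = "frechet_derivative F (at v)"
  define g where "g t = F (v + t *\<^sub>R (u - v))" for t :: real
  have "convex_on UNIV g"
  proof (rule convex_onI)
    fix t a b :: real assume t: "0 < t" "t < 1"
    have "v + ((1 - t) * a + t * b) *\<^sub>R (u - v)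
        = (1 - t) *\<^sub>R (v + a *\<^sub>R (u - v)) + t *\<^sub>R (v + b *\<^sub>R (u - v))"
      by (simp add: algebra_simps)
    then show "g ((1 - t) *\<^sub>R a + t *\<^sub>R b) \<le> (1 - t) * g a + t * g b"
      unfolding g_def using convex_onD[OF conv, of t] t by simp
  qed simp
  moreover have "(g has_field_derivative ?D (u - v)) (at 0)"
  proof -
    have F': "(F has_derivative ?D) (at v)"
      using diff frechet_derivative_works by blast
    have "(g has_derivative (\<lambda>t. ?D (t *\<^sub>R (u - v)))) (at 0)"
      unfolding g_def
      by (rule has_derivative_compose[where f = "\<lambda>t. v + t *\<^sub>R (u - v)", simplified o_def])
         (auto intro!: derivative_eq_intros F'[unfolded o_def])
    then show ?thesis
      using linear_scale[OF has_derivative_linear[OF F']]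
      by (simp add: has_field_derivative_def mult.commute[of _ "?D (u - v)"])
  qed
  ultimately have "g 1 - g 0 \<ge> ?D (u - v) * (1 - 0)"
    by (intro convex_on_imp_above_tangent) auto
  then show ?thesis
    unfolding bregman_def g_def by simp
qed

lemma Gamma0_finite_on_edom:
  assumes "Gamma0 G" and "u \<in> edom G"
  shows "\<bar>G u\<bar> \<noteq> \<infinity>"
  using assms by (auto simp: Gamma0_def proper_convex_lsc_on_def edom_def)

lemma local_stability_nonneg:
  assumes "ereal (bregman F x v) \<le> ereal \<omega>0 * \<delta>" and "0 < \<omega>0"
    and "F differentiable (at v)" and "convex_on UNIV F"
  shows "0 \<le> \<delta>"
proof -
  have "0 \<le> ereal \<omega>0 * \<delta>"
    using assms(1) bregman_nonneg[OF assms(3,4), of x] by (metis ereal_less_eq(5) order_trans)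
  then show ?thesis
    using \<open>0 < \<omega>0\<close> by (cases \<delta>) (auto simp: zero_le_mult_iff)
qed

lemma local_stability_mono:
  assumes "ereal (bregman F x v) \<le> ereal \<omega>0 * \<delta>" and "0 < \<omega>0" and "\<omega>0 \<le> \<omega>"
    and "F differentiable (at v)" and "convex_on UNIV F"
  shows "ereal (bregman F x v) \<le> ereal \<omega> * \<delta>"
  using assms(1) ereal_mult_right_mono[of "ereal \<omega>0" "ereal \<omega>" \<delta>]
    local_stability_nonneg[OF assms(1,2,4,5)] assms(3) by (metis ereal_less_eq(3) order_trans)

lemma ereal_le_affine_Inf:
  fixes S :: "ereal set"
  assumes "0 < t" and "\<And>s. s \<in> S \<Longrightarrow> ereal a \<le> ereal t * s + ereal c"
  shows "ereal a \<le> ereal t * Inf S + ereal c"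
proof -
  have "ereal ((a - c) / t) \<le> Inf S"
  proof (rule Inf_greatest)
    fix s assume "s \<in> S"
    then show "ereal ((a - c) / t) \<le> s"
      using assms(2)[of s] \<open>0 < t\<close> by (cases s) (auto simp: field_simps)
  qed
  then show ?thesis
    using \<open>0 < t\<close> by (cases "Inf S") (auto simp: pos_divide_le_eq algebra_simps)
qed

lemma bregman_plus_le_by_strengthened_convexity:
  fixes F :: "'v::real_normed_vector \<Rightarrow> real" and G :: "'v \<Rightarrow> ereal"
    and x :: "'k \<Rightarrow> 'v" and s :: "'k \<Rightarrow> ereal"
  assumes diff: "F differentiable (at v)" and \<tau>: "0 < \<tau>"
    and Gu: "\<bar>G u\<bar> \<noteq> \<infinity>" and Gv: "\<bar>G v\<bar> \<noteq> \<infinity>"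
    and uv: "u - v = \<tau> *\<^sub>R (\<Sum>k\<in>I. x k)"
    and conv: "ereal (F u) + G u \<le> ereal (1 - \<tau> * real (card I)) * (ereal (F v) + G v)
                 + ereal \<tau> * (\<Sum>k\<in>I. ereal (F (v + x k)) + G (v + x k))"
    and local: "\<And>k. k \<in> I \<Longrightarrow> ereal (bregman F (v + x k) v) + G (v + x k) \<le> s k"
  shows "ereal (bregman F u v) + G u \<le> ereal \<tau> * (\<Sum>k\<in>I. s k) + ereal (1 - \<tau> * real (card I)) * G v"
proof -
  let ?D = "frechet_derivative F (at v)"
  let ?n = "real (card I)"
  have D: "linear ?D"
    using diff frechet_derivative_works has_derivative_linear by blast
  obtain gu gv where gu: "G u = ereal gu" and gv: "G v = ereal gv"
    using Gu Gv by (cases "G u"; cases "G v") auto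
  have summand: "ereal (F (v + x k)) + G (v + x k) \<le> ereal (F v + ?D (x k)) + s k"
    if "k \<in> I" for k
  proof -
    have "ereal (F (v + x k)) + G (v + x k)
        = ereal (F v + ?D (x k)) + (ereal (bregman F (v + x k) v) + G (v + x k))"
      unfolding bregman_def by (cases "G (v + x k)") auto
    then show ?thesis
      using local[OF that] by (simp add: add_left_mono)
  qed
  let ?A = "?n * F v + ?D (\<Sum>k\<in>I. x k)"
  have "(\<Sum>k\<in>I. ereal (F (v + x k)) + G (v + x k)) \<le> (\<Sum>k\<in>I. ereal (F v + ?D (x k)) + s k)"
    using summand by (rule sum_mono)
  also have "\<dots> = ereal ?A + (\<Sum>k\<in>I. s k)"
    by (simp add: sum.distrib linear_sum[OF D])
  finally have "ereal \<tau> * (\<Sum>k\<in>I. ereal (F (v + x k)) + G (v + x k))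
      \<le> ereal \<tau> * (ereal ?A + (\<Sum>k\<in>I. s k))"
    using \<tau> by (intro ereal_mult_left_mono) auto
  also have "\<dots> = ereal (\<tau> * ?A) + ereal \<tau> * (\<Sum>k\<in>I. s k)"
    using \<tau> by (simp add: ereal_pos_distrib)
  finally have "ereal (1 - \<tau> * ?n) * (ereal (F v) + G v)
      + ereal \<tau> * (\<Sum>k\<in>I. ereal (F (v + x k)) + G (v + x k))
      \<le> ereal ((1 - \<tau> * ?n) * (F v + gv)) + (ereal (\<tau> * ?A) + ereal \<tau> * (\<Sum>k\<in>I. s k))"
    unfolding gv by (simp only: plus_ereal.simps times_ereal.simps add_left_mono)
  with conv have "ereal (F u) + G u
      \<le> ereal ((1 - \<tau> * ?n) * (F v + gv)) + (ereal (\<tau> * ?A) + ereal \<tau> * (\<Sum>k\<in>I. s k))"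
    by (rule order_trans)
  moreover have "\<tau> * ?D (\<Sum>k\<in>I. x k) = ?D (u - v)"
    unfolding uv using linear_scale[OF D] by simp
  ultimately show ?thesis
    unfolding bregman_def gu gv
    using \<tau> by (cases "ereal \<tau> * (\<Sum>k\<in>I. s k)") (auto simp: ring_distribs)
qed

lemma M_tau_omega_lower_bound:
  fixes F :: "'v::real_normed_vector \<Rightarrow> real" and G :: "'v \<Rightarrow> ereal"
    and R :: "nat \<Rightarrow> 'w::real_vector \<Rightarrow> 'v"
  assumes diff: "F differentiable (at v)" and conv: "convex_on UNIV F"
    and \<tau>: "0 < \<tau>" and \<omega>: "0 < \<omega>0" "\<omega>0 \<le> \<omega>"
    and Gu: "\<bar>G u\<bar> \<noteq> \<infinity>" and Gv: "\<bar>G v\<bar> \<noteq> \<infinity>"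
    and strong: "\<And>w. \<forall>k\<in>{1..N}. w k \<in> Vk k \<Longrightarrow>
      ereal (F (v + \<tau> *\<^sub>R (\<Sum>k=1..N. R k (w k)))) + G (v + \<tau> *\<^sub>R (\<Sum>k=1..N. R k (w k)))
        \<le> ereal (1 - \<tau> * real N) * (ereal (F v) + G v)
          + ereal \<tau> * (\<Sum>k=1..N. ereal (F (v + R k (w k))) + G (v + R k (w k)))"
    and local: "\<And>k w. k \<in> {1..N} \<Longrightarrow> w \<in> Vk k \<Longrightarrow>
      ereal (bregman F (v + R k w) v) \<le> ereal \<omega>0 * d k w v \<and> G (v + R k w) \<le> Gk k w v"
  shows "ereal (bregman F u v) + G u \<le> M_tau_omega N Vk R d Gk G \<tau> \<omega> u v"
proof -
  obtain gv where gv: "G v = ereal gv"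
    using Gv by (cases "G v") auto
  obtain b where b: "ereal (bregman F u v) + G u = ereal b"
    using Gu by (cases "G u") auto
  have admissible: "ereal b \<le> ereal \<tau> * s + ereal ((1 - \<tau> * real N) * gv)"
    if "s \<in> {(\<Sum>k=1..N. ereal \<omega> * d k (w k) v + Gk k (w k) v) | w.
               (\<forall>k\<in>{1..N}. w k \<in> Vk k) \<and> u - v = \<tau> *\<^sub>R (\<Sum>k=1..N. R k (w k))}" for s
  proof -
    from that obtain w where w: "\<forall>k\<in>{1..N}. w k \<in> Vk k"
      and uv: "u - v = \<tau> *\<^sub>R (\<Sum>k=1..N. R k (w k))"
      and s: "s = (\<Sum>k=1..N. ereal \<omega> * d k (w k) v + Gk k (w k) v)"
      by blast
    have u: "u = v + \<tau> *\<^sub>R (\<Sum>k=1..N. R k (w k))"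
      using uv by (simp add: algebra_simps)
    have "ereal (bregman F (v + R k (w k)) v) + G (v + R k (w k))
        \<le> ereal \<omega> * d k (w k) v + Gk k (w k) v" if "k \<in> {1..N}" for k
      using local[OF that w[rule_format, OF that]] local_stability_mono[OF _ \<omega> diff conv]
      by (blast intro: add_mono)
    then have "ereal (bregman F u v) + G u \<le> ereal \<tau> * s + ereal (1 - \<tau> * real N) * G v"
      unfolding s using bregman_plus_le_by_strengthened_convexity[OF diff \<tau> Gu Gv uv]
        strong[OF w, folded u] by simp
    then show ?thesis
      by (simp add: b gv)
  qed
  show ?thesis
    unfolding M_tau_omega_def b gv times_ereal.simps(1)
    by (rule ereal_le_affine_Inf[OF \<tau> admissible])
qed

lemma stable_decomposition_sum_le:
  fixes \<delta> \<gamma> :: "'k \<Rightarrow> ereal"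
  assumes \<tau>: "0 < \<tau>" and \<omega>: "0 \<le> \<omega>" and \<delta>: "\<And>k. k \<in> I \<Longrightarrow> 0 \<le> \<delta> k"
    and g: "\<bar>g\<bar> \<noteq> \<infinity>"
    and sum_\<delta>: "(\<Sum>k\<in>I. \<delta> k) \<le> ereal c"
    and sum_\<gamma>: "(\<Sum>k\<in>I. \<gamma> k) \<le> g' + ereal (real (card I) - 1) * g"
  shows "ereal \<tau> * (\<Sum>k\<in>I. ereal \<omega> * \<delta> k + \<gamma> k) + ereal (1 - \<tau> * real (card I)) * g
    \<le> ereal (\<tau> * \<omega> * c) + ereal \<tau> * g' + ereal (1 - \<tau>) * g"
proof -
  let ?n = "real (card I)"
  obtain r where r: "g = ereal r"
    using g by (cases g) auto
  have "(\<Sum>k\<in>I. ereal \<omega> * \<delta> k + \<gamma> k) = ereal \<omega> * (\<Sum>k\<in>I. \<delta> k) + (\<Sum>k\<in>I. \<gamma> k)"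
    by (simp add: sum.distrib sum_ereal_right_distrib \<delta>)
  also have "\<dots> \<le> ereal \<omega> * ereal c + (g' + ereal ((?n - 1) * r))"
    using sum_\<delta> sum_\<gamma> \<omega> by (intro add_mono ereal_mult_left_mono) (auto simp: r)
  finally have "ereal \<tau> * (\<Sum>k\<in>I. ereal \<omega> * \<delta> k + \<gamma> k)
      \<le> ereal \<tau> * (ereal \<omega> * ereal c + (g' + ereal ((?n - 1) * r)))"
    using \<tau> by (intro ereal_mult_left_mono) auto
  also have "\<dots> = ereal (\<tau> * \<omega> * c) + ereal \<tau> * g' + ereal (\<tau> * (?n - 1) * r)"
    using \<tau> by (simp add: ereal_pos_distrib add.assoc mult.assoc)
  finally have "ereal \<tau> * (\<Sum>k\<in>I. ereal \<omega> * \<delta> k + \<gamma> k) + ereal ((1 - \<tau> * ?n) * r)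
      \<le> ereal (\<tau> * \<omega> * c) + ereal \<tau> * g' + ereal (\<tau> * (?n - 1) * r) + ereal ((1 - \<tau> * ?n) * r)"
    by (rule add_right_mono)
  also have "\<dots> = ereal (\<tau> * \<omega> * c) + ereal \<tau> * g' + ereal (1 - \<tau>) * g"
    by (cases "ereal \<tau> * g'") (simp_all add: r algebra_simps)
  finally show ?thesis
    by (simp add: r)
qed

lemma M_tau_omega_le_of_decomposition:
  fixes G :: "'v::real_normed_vector \<Rightarrow> ereal" and R :: "nat \<Rightarrow> 'w::real_vector \<Rightarrow> 'v"
    and u v :: 'v and \<tau> :: real
  defines "u' \<equiv> (1 / \<tau>) *\<^sub>R u - (1 / \<tau> - 1) *\<^sub>R v"
  assumes \<tau>: "0 < \<tau>" and \<omega>: "0 \<le> \<omega>" and Gv: "\<bar>G v\<bar> \<noteq> \<infinity>"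
    and w: "\<forall>k\<in>{1..N}. w k \<in> Vk k" and dec: "u' - v = (\<Sum>k=1..N. R k (w k))"
    and d: "\<forall>k\<in>{1..N}. 0 \<le> d k (w k) v"
    and sum_d: "(\<Sum>k=1..N. d k (w k) v) \<le> ereal (C powr q / q * norm (u' - v) powr q)"
    and sum_Gk: "(\<Sum>k=1..N. Gk k (w k) v) \<le> G u' + ereal (real N - 1) * G v"
  shows "M_tau_omega N Vk R d Gk G \<tau> \<omega> u v
    \<le> ereal (\<omega> * C powr q / (q * \<tau> powr (q - 1)) * norm (u - v) powr q)
      + ereal \<tau> * G u' + ereal (1 - \<tau>) * G v"
proof -
  have uv': "u - v = \<tau> *\<^sub>R (u' - v)"
    unfolding u'_def using \<tau> by (simp add: algebra_simps)
  have "M_tau_omega N Vk R d Gk G \<tau> \<omega> u v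
      \<le> ereal \<tau> * (\<Sum>k=1..N. ereal \<omega> * d k (w k) v + Gk k (w k) v) + ereal (1 - \<tau> * real N) * G v"
    unfolding M_tau_omega_def using w uv' dec \<tau>
    by (intro add_right_mono ereal_mult_left_mono Inf_lower) auto
  also have "\<dots> \<le> ereal (\<tau> * \<omega> * (C powr q / q * norm (u' - v) powr q))
      + ereal \<tau> * G u' + ereal (1 - \<tau>) * G v"
    using stable_decomposition_sum_le[OF \<tau> \<omega> _ Gv sum_d] sum_Gk d by simp
  also have "\<tau> * \<omega> * (C powr q / q * norm (u' - v) powr q)
      = \<omega> * C powr q / (q * \<tau> powr (q - 1)) * norm (u - v) powr q"
  proof -
    have "norm (u - v) powr q = \<tau> * \<tau> powr (q - 1) * norm (u' - v) powr q"
      using \<tau> by (simp add: uv' powr_mult powr_diff)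
    then show ?thesis
      using \<tau> by (cases "q = 0") (simp_all add: field_simps)
  qed
  finally show ?thesis .
qed

lemma scaled_differences_eq_image:
  "{a *\<^sub>R u - b *\<^sub>R v | u v. u \<in> K \<and> v \<in> K} = (\<lambda>p. a *\<^sub>R fst p - b *\<^sub>R snd p) ` (K \<times> K)"
  by force

lemma bounded_scaled_differences:
  fixes K :: "'a::real_normed_vector set"
  assumes "bounded K"
  shows "bounded {a *\<^sub>R u - b *\<^sub>R v | u v. u \<in> K \<and> v \<in> K}"
  unfolding scaled_differences_eq_image
  using assms by (intro bounded_linear_image bounded_Times bounded_linear_intros)

lemma convex_scaled_differences:
  fixes K :: "'a::real_vector set"
  assumes "convex K"
  shows "convex {a *\<^sub>R u - b *\<^sub>R v | u v. u \<in> K \<and> v \<in> K}"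
  unfolding scaled_differences_eq_image
  using assms by (intro convex_linear_image convex_Times linear_compose_sub linearI) (auto simp: algebra_simps)

definition stable_decomposition_on ::
  "nat \<Rightarrow> (nat \<Rightarrow> 'w::real_vector set) \<Rightarrow> (nat \<Rightarrow> 'w \<Rightarrow> 'v::real_normed_vector)
   \<Rightarrow> (nat \<Rightarrow> 'w \<Rightarrow> 'v \<Rightarrow> ereal) \<Rightarrow> (nat \<Rightarrow> 'w \<Rightarrow> 'v \<Rightarrow> ereal) \<Rightarrow> ('v \<Rightarrow> ereal)
   \<Rightarrow> real \<Rightarrow> real \<Rightarrow> 'v set \<Rightarrow> bool" where
  "stable_decomposition_on N Vk R d Gk G q C S \<longleftrightarrow>
     (\<forall>u\<in>S \<inter> edom G. \<forall>v\<in>S \<inter> edom G. \<exists>w.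
        (\<forall>k\<in>{1..N}. w k \<in> Vk k) \<and> u - v = (\<Sum>k=1..N. R k (w k)) \<and>
        (\<Sum>k=1..N. d k (w k) v) \<le> ereal (C powr q / q * norm (u - v) powr q) \<and>
        (\<Sum>k=1..N. Gk k (w k) v) \<le> G u + ereal (real N - 1) * G v)"

lemma M_tau_omega_upper_bound:
  fixes G :: "'v::real_normed_vector \<Rightarrow> ereal" and R :: "nat \<Rightarrow> 'w::real_vector \<Rightarrow> 'v"
    and u v :: 'v and \<tau> :: real and K :: "'v set"
  defines "u' \<equiv> (1 / \<tau>) *\<^sub>R u - (1 / \<tau> - 1) *\<^sub>R v"
    and "K' \<equiv> {(1 / \<tau>) *\<^sub>R x - (1 / \<tau> - 1) *\<^sub>R y | x y. x \<in> K \<and> y \<in> K}"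
  assumes \<tau>: "0 < \<tau>" and \<omega>: "0 \<le> \<omega>" and Gv: "\<bar>G v\<bar> \<noteq> \<infinity>"
    and d: "\<And>k w. k \<in> {1..N} \<Longrightarrow> w \<in> Vk k \<Longrightarrow> 0 \<le> d k w v"
    and K: "u \<in> K" "v \<in> K"
    and stable: "stable_decomposition_on N Vk R d Gk G q C K'"
  shows "M_tau_omega N Vk R d Gk G \<tau> \<omega> u v
    \<le> ereal (\<omega> * C powr q / (q * \<tau> powr (q - 1)) * norm (u - v) powr q)
      + ereal \<tau> * G u' + ereal (1 - \<tau>) * G v"
proof (cases "G u' = \<infinity>")
  case True
  then show ?thesis
    using \<tau> Gv by (cases "G v") auto
next
  case False
  have "v = (1 / \<tau>) *\<^sub>R v - (1 / \<tau> - 1) *\<^sub>R v"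
    by (simp add: algebra_simps)
  then have "u' \<in> K' \<inter> edom G" and "v \<in> K' \<inter> edom G"
    using K False Gv unfolding u'_def K'_def edom_def by auto
  then obtain w where w: "\<forall>k\<in>{1..N}. w k \<in> Vk k" and dec: "u' - v = (\<Sum>k=1..N. R k (w k))"
    and sum_d: "(\<Sum>k=1..N. d k (w k) v) \<le> ereal (C powr q / q * norm (u' - v) powr q)"
    and sum_Gk: "(\<Sum>k=1..N. Gk k (w k) v) \<le> G u' + ereal (real N - 1) * G v"
    using stable unfolding stable_decomposition_on_def by meson
  have d_w: "\<forall>k\<in>{1..N}. 0 \<le> d k (w k) v"
    using d w by blast
  from \<tau> \<omega> Gv w dec d_w sum_d sum_Gk show ?thesis
    unfolding u'_def by (rule M_tau_omega_le_of_decomposition)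
qed

theorem lemma4p6:
  fixes F :: "'v::banach \<Rightarrow> real" and G :: "'v \<Rightarrow> ereal"
    and N :: nat
    and Vk :: "nat \<Rightarrow> 'w::banach set"
    and R :: "nat \<Rightarrow> 'w \<Rightarrow> 'v"
    and d Gk :: "nat \<Rightarrow> 'w \<Rightarrow> 'v \<Rightarrow> ereal"
    and q \<tau>0 \<omega>0 \<tau> \<omega> :: real
    and C0 :: "'v set \<Rightarrow> real"
  defines "E \<equiv> (\<lambda>v. ereal (F v) + G v)"
  assumes reflV: "reflexive_space TYPE('v)"
    and reflW: "reflexive_space TYPE('w)"
    and F_diff: "\<forall>x. F differentiable (at x)"
    and F_conv: "convex_on UNIV F"
    and G_Gamma0: "Gamma0 G"
    and N_pos: "N \<ge> 1"
    and Vk_sub: "\<forall>k\<in>{1..N}. subspace (Vk k) \<and> closed (Vk k)"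
    and R_lin: "\<forall>k\<in>{1..N}. bounded_linear (R k)"
    and sum_decomp: "\<forall>u. \<exists>w. (\<forall>k\<in>{1..N}. w k \<in> Vk k) \<and> u = (\<Sum>k=1..N. R k (w k))"
    and adj_surj: "\<forall>k\<in>{1..N}. \<forall>g :: 'w \<Rightarrow>\<^sub>L real. \<exists>f :: 'v \<Rightarrow>\<^sub>L real.
                      \<forall>x\<in>Vk k. blinfun_apply f (R k x) = blinfun_apply g x"
    and d_pcl: "\<forall>k\<in>{1..N}. \<forall>v. proper_convex_lsc_on (Vk k) (\<lambda>w. d k w v)"
    and Gk_pcl: "\<forall>k\<in>{1..N}. \<forall>v. proper_convex_lsc_on (Vk k) (\<lambda>w. Gk k w v)"
    and q_gt: "q > 1"
    and stable: "\<forall>K. bounded K \<and> convex K \<longrightarrow> C0 K > 0 \<and>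
                  (\<forall>u\<in>K \<inter> edom G. \<forall>v\<in>K \<inter> edom G. \<exists>w.
                     (\<forall>k\<in>{1..N}. w k \<in> Vk k) \<and> u - v = (\<Sum>k=1..N. R k (w k)) \<and>
                     (\<Sum>k=1..N. d k (w k) v) \<le> ereal (C0 K powr q / q * norm (u - v) powr q) \<and>
                     (\<Sum>k=1..N. Gk k (w k) v) \<le> G u + ereal (real N - 1) * G v)"
    and tau0: "0 < \<tau>0" "\<tau>0 \<le> 1"
    and strong_conv: "\<forall>v w t. (\<forall>k\<in>{1..N}. w k \<in> Vk k) \<and> 0 < t \<and> t \<le> \<tau>0 \<longrightarrow>
                  ereal (1 - t * real N) * E v + ereal t * (\<Sum>k=1..N. E (v + R k (w k)))
                    \<ge> E (v + t *\<^sub>R (\<Sum>k=1..N. R k (w k)))"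
    and omega0: "\<omega>0 > 0"
    and local_stab: "\<forall>v\<in>edom G. \<forall>k\<in>{1..N}. \<forall>w\<in>Vk k.
                  ereal (bregman F (v + R k w) v) \<le> ereal \<omega>0 * d k w v \<and>
                  G (v + R k w) \<le> Gk k w v"
    and tau: "0 < \<tau>" "\<tau> \<le> \<tau>0"
    and omega: "\<omega> \<ge> \<omega>0"
  shows "\<forall>K. bounded K \<and> convex K \<longrightarrow>
           (let K' = {(1 / \<tau>) *\<^sub>R u - (1 / \<tau> - 1) *\<^sub>R v | u v. u \<in> K \<and> v \<in> K} in
            \<forall>u\<in>K \<inter> edom G. \<forall>v\<in>K \<inter> edom G.
              ereal (bregman F u v) + G u \<le> M_tau_omega N Vk R d Gk G \<tau> \<omega> u v \<and>
              M_tau_omega N Vk R d Gk G \<tau> \<omega> u v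
                \<le> ereal (\<omega> * C0 K' powr q / (q * \<tau> powr (q - 1)) * norm (u - v) powr q)
                  + ereal \<tau> * G ((1 / \<tau>) *\<^sub>R u - (1 / \<tau> - 1) *\<^sub>R v)
                  + ereal (1 - \<tau>) * G v)"
proof -
  have lower: "ereal (bregman F u v) + G u \<le> M_tau_omega N Vk R d Gk G \<tau> \<omega> u v"
    if "u \<in> edom G" "v \<in> edom G" for u v
    by (rule M_tau_omega_lower_bound[where d = d and Gk = Gk, OF F_diff[rule_format] F_conv tau(1)
          omega0 omega])
      (use that G_Gamma0 local_stab strong_conv tau in \<open>auto simp: Gamma0_finite_on_edom E_def\<close>)
  have upper: "M_tau_omega N Vk R d Gk G \<tau> \<omega> u v
      \<le> ereal (\<omega> * C0 {(1 / \<tau>) *\<^sub>R x - (1 / \<tau> - 1) *\<^sub>R y | x y. x \<in> K \<and> y \<in> K} powr q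
            / (q * \<tau> powr (q - 1)) * norm (u - v) powr q)
        + ereal \<tau> * G ((1 / \<tau>) *\<^sub>R u - (1 / \<tau> - 1) *\<^sub>R v) + ereal (1 - \<tau>) * G v"
    if K: "bounded K" "convex K" and u: "u \<in> K \<inter> edom G" and v: "v \<in> K \<inter> edom G" for K u v
  proof (rule M_tau_omega_upper_bound)
    let ?K' = "{(1 / \<tau>) *\<^sub>R x - (1 / \<tau> - 1) *\<^sub>R y | x y. x \<in> K \<and> y \<in> K}"
    have "bounded ?K' \<and> convex ?K'"
      using K by (simp add: bounded_scaled_differences convex_scaled_differences)
    then show "stable_decomposition_on N Vk R d Gk G q (C0 ?K') ?K'"
      using stable unfolding stable_decomposition_on_def by blast
    show "\<And>k w. k \<in> {1..N} \<Longrightarrow> w \<in> Vk k \<Longrightarrow> 0 \<le> d k w v"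
      using local_stab v local_stability_nonneg[OF _ omega0 F_diff[rule_format] F_conv] by blast
  qed (use u v G_Gamma0 tau omega omega0 in \<open>auto simp: Gamma0_finite_on_edom\<close>)
  show ?thesis
    unfolding Let_def using lower upper by blast
qed

end
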